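(* Assume $\sigma_1(x)=\tfrac12\sigma_1''(0)\,x(x-a_1)$ and $\sigma_2(x)=\tfrac12\sigma_2''(0)\,x(x-a_2)$ with $\sigma_1''(0)\ne0$, $\sigma_2''(0)\ne0$ and real $a_2<0<a_1$. Let $\Lambda_q=q^{-2}\Big[1+\frac{(1-q^{-1})\tau'(0)}{\frac12\sigma_1''(0)}\Big]$ and $y_0=q^{-1}\Big[1-\frac{(1-q^{-1})}{a_1}\frac{\tau(0)}{\frac12\sigma_1''(0)}\Big]$, and assume $0<qy_0<1$ and $q^2\Lambda_q<0$. Put $b=a_1$ and $$\rho(x)=|x|^{\alpha}\frac{(qx/b;q)_\infty}{(x/a_2;q)_\infty},\qquad q^{\alpha}=\frac{q^{-2}\sigma_2''(0)a_2}{\sigma_1''(0)b}.$$ Then there exist polynomials $P_n$, $n\in\mathbb{N}_0$, with $P_n$ of degree $n$ a solution of the q-EHT with $\lambda=\lambda_n$, and nonzero constants $d_n^2$, such that for all $m,n\in\mathbb{N}_0$ $$\int_0^{b}P_n(x)P_m(x)\rho(x)\,d_qx=d_n^2\delta_{mn},$$ i.e. orthogonality on $(0,b]$ with respect to $\rho$ supported on $\{q^kb\}_{k\in\mathbb{N}_0}$.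
   Context: Throughout $0<q<1$. For a function $y$ and $\zeta\in\{q,q^{-1}\}$, $D_\zeta y(x)=\frac{y(x)-y(\zeta x)}{(1-\zeta)x}$ for $x\ne0$ and $D_\zeta y(0)=y'(0)$; $[n]_q=\frac{1-q^n}{1-q}$. Let $\sigma_1$ be a real polynomial of degree at most two, $\tau(x)=\tau'(0)x+\tau(0)$ a real polynomial with $\tau'(0)\ne0$, and $\sigma_2(x):=q[\sigma_1(x)+(1-q^{-1})x\tau(x)]$. The q-EHT with parameter $n$ is $\sigma_1(x)D_{q^{-1}}D_qy(x)+\tau(x)D_qy(x)+\lambda_ny(x)=0$, $\lambda_n=-[n]_q\big(\tau'(0)+\tfrac12[n-1]_{q^{-1}}\sigma_1''(0)\big)$. $(\beta;q)_\infty=\prod_{k\ge0}(1-\beta q^k)$. For $q^\alpha=c$ ($c\ne0$), $\alpha$ is any complex number with $e^{\alpha\ln q}=c$ and $|x|^\alpha:=e^{\alpha\ln|x|}$. For $b>0$, $\int_0^b f(x)\,d_qx=(1-q)b\sum_{j\ge0}q^jf(q^jb)$. *)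

theory Defs
  imports "HOL-Analysis.Analysis" "HOL-Computational_Algebra.Polynomial"
begin

definition qdiff :: "real \<Rightarrow> (real \<Rightarrow> real) \<Rightarrow> real \<Rightarrow> real" where
  "qdiff \<zeta> y x = (if x = 0 then deriv y 0 else (y x - y (\<zeta> * x)) / ((1 - \<zeta>) * x))"

definition qnum :: "real \<Rightarrow> real \<Rightarrow> real" where
  "qnum q r = (1 - q powr r) / (1 - q)"

text \<open>Eigenvalue lambda_n of the q-EHT; s1 = sigma_1''(0), t1 = tau'(0).\<close>
definition qEHT_lambda :: "real \<Rightarrow> real \<Rightarrow> real \<Rightarrow> nat \<Rightarrow> real" where
  "qEHT_lambda q s1 t1 n = - qnum q (real n) * (t1 + 1/2 * qnum (1/q) (real n - 1) * s1)"

definition solves_qEHT ::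
  "real \<Rightarrow> (real \<Rightarrow> real) \<Rightarrow> (real \<Rightarrow> real) \<Rightarrow> real \<Rightarrow> (real \<Rightarrow> real) \<Rightarrow> bool" where
  "solves_qEHT q \<sigma>1 \<tau> lam y \<longleftrightarrow>
     (\<forall>x. \<sigma>1 x * qdiff (1/q) (qdiff q y) x + \<tau> x * qdiff q y x + lam * y x = 0)"

definition qpoch_inf :: "real \<Rightarrow> real \<Rightarrow> real" where
  "qpoch_inf \<beta> q = (\<Prod>k. 1 - \<beta> * q ^ k)"

definition cabs_pow :: "real \<Rightarrow> complex \<Rightarrow> complex" where
  "cabs_pow x \<alpha> = exp (\<alpha> * of_real (ln \<bar>x\<bar>))"

end

theory Submission
  imports Defs
begin

text \<open>
  The operator L = \<sigma>1 D_{1/q} D_q + \<tau> D_q maps x^k to -\<lambda>_k x^k + \<nu>_k x^(k-1). Since \<Lambda>_q < 0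
  makes the eigenvalues \<lambda>_k pairwise distinct, the triangular system for the coefficients of a
  monic solution of degree n can be solved from the top coefficient down.

  For orthogonality, L is a second order difference operator
  A(x) (y(qx) - y(x)) + B(x) (y(x/q) - y(x)) with A = \<sigma>2/((1-q)x)^2 and B = q^2 \<sigma>1/((1-q)x)^2.
  On the lattice x_j = q^j b the weights w_j = q^j \<rho>(x_j), taken up to the factor |b|^\<alpha>,
  satisfy the q-Pearson equation w_(j+1) \<sigma>1(x_(j+1)) = w_j \<sigma>2(x_j), so by a discrete Lagrange
  identity the partial sums of (\<lambda>_m - \<lambda>_n) w_j P_n(x_j) P_m(x_j) collapse to a single Casoratian
  boundary term. Nothing is contributed at x_0 = b because \<sigma>1(b) = 0, and the term at the
  accumulation point 0 tends to zero because w is summable (0 < q^(\<alpha>+1) < 1). Positive weights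
  give nonzero norms.
\<close>

lemma qpoch_inf_convergent_prod:
  fixes \<beta> q :: real assumes "0 < q" "q < 1"
  shows "convergent_prod (\<lambda>k. 1 - \<beta> * q ^ k)"
proof -
  have "summable (\<lambda>k. norm ((1 - \<beta> * q ^ k) - 1))"
    using assms by (simp add: abs_mult power_abs summable_geometric)
  then show ?thesis
    by (intro abs_convergent_prod_imp_convergent_prod summable_imp_abs_convergent_prod)
qed

lemma mult_power_less_one:
  fixes \<beta> q :: real assumes "0 < q" "q \<le> 1" "\<beta> < 1"
  shows "\<beta> * q ^ j < 1"
proof (cases "\<beta> \<le> 0")
  case True
  then show ?thesis using assms by (smt (verit) mult_nonpos_nonneg zero_le_power)
next
  case False
  then have "\<beta> * q ^ j \<le> \<beta>" using assms by (simp add: mult_left_le power_le_one)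
  then show ?thesis using assms by simp
qed

lemma qpoch_inf_pos:
  fixes \<beta> q :: real assumes "0 < q" "q < 1" "\<beta> < 1"
  shows "qpoch_inf \<beta> q > 0"
  unfolding qpoch_inf_def
  using mult_power_less_one[of q \<beta>] assms
  by (intro less_0_prodinf[OF qpoch_inf_convergent_prod]) auto

lemma qpoch_inf_shift:
  fixes \<beta> q :: real assumes "0 < q" "q < 1" "\<beta> \<noteq> 1"
  shows "qpoch_inf \<beta> q = (1 - \<beta>) * qpoch_inf (\<beta> * q) q"
proof -
  have "(\<Prod>k. 1 - \<beta> * q ^ Suc k) = qpoch_inf \<beta> q / (1 - \<beta>)"
    using prodinf_split_head[OF qpoch_inf_convergent_prod[OF assms(1,2)], of \<beta>] assms
    by (simp add: qpoch_inf_def)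
  then show ?thesis
    using assms by (simp add: qpoch_inf_def mult.assoc mult.left_commute field_simps)
qed

lemma qnum_of_nat: "0 < q \<Longrightarrow> qnum q (real n) = (1 - q ^ n) / (1 - q)"
  by (simp add: qnum_def powr_realpow)

lemma qnum_Suc:
  assumes "0 < q" "q \<noteq> 1" shows "qnum q (real (Suc n)) = qnum q (real n) + q ^ n"
  using assms unfolding qnum_of_nat[OF assms(1)] by (simp add: field_simps)

lemma qnum_strict_mono:
  assumes "0 < q" "q \<noteq> 1" shows "strict_mono (\<lambda>n. qnum q (real n))"
  using qnum_Suc[OF assms] assms(1) by (simp add: strict_mono_Suc_iff del: of_nat_Suc)

lemma qnum_nonneg:
  assumes "0 < q" "q \<noteq> 1" shows "0 \<le> qnum q (real n)"
  using strict_mono_less_eq[OF qnum_strict_mono[OF assms], of 0 n] assms by (simp add: qnum_def)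

lemma qEHT_lambda_inj:
  assumes q: "0 < q" "q \<noteq> 1" and "0 < t1 / s1"
  shows "inj (qEHT_lambda q s1 t1)"
proof -
  define G where "G n = qnum q (real n) * (2 * t1 / s1 + qnum (1/q) (real n - 1))" for n
  have s1: "s1 \<noteq> 0" using assms(3) by auto
  have q': "0 < 1/q" "1/q \<noteq> 1" using q by auto
  have lam: "qEHT_lambda q s1 t1 = (\<lambda>n. - (s1 / 2) * G n)"
    using s1 by (auto simp: fun_eq_iff qEHT_lambda_def G_def field_simps)
  have "G n < G (Suc n)" for n
  proof (cases n)
    case 0
    then show ?thesis using assms by (simp add: G_def qnum_def)
  next
    case (Suc m)
    have "qnum q (real 0) < qnum q (real n)" "qnum q (real n) < qnum q (real (Suc n))"
      "qnum (1/q) (real m) < qnum (1/q) (real n)"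
      using strict_mono_less[OF qnum_strict_mono[OF q], of 0 n]
        strict_mono_less[OF qnum_strict_mono[OF q], of n "Suc n"]
        strict_mono_less[OF qnum_strict_mono[OF q'], of m n] Suc
      by simp_all
    moreover have "qnum q (real 0) = 0" "0 \<le> qnum (1/q) (real m)"
      using q qnum_nonneg[OF q'] by (simp_all add: qnum_def)
    ultimately show ?thesis
      using assms Suc unfolding G_def by (simp add: mult_strict_mono add_pos_nonneg)
  qed
  then have "inj G" by (intro strict_mono_imp_inj_on) (simp add: strict_mono_Suc_iff)
  then show ?thesis using s1 by (simp add: lam inj_def)
qed

lemma qEHT_difference_form:
  fixes \<sigma> \<tau> f :: "real \<Rightarrow> real"
  assumes "q \<noteq> 0" "q \<noteq> 1" "x \<noteq> 0"
  shows "\<sigma> x * qdiff (1/q) (qdiff q f) x + \<tau> x * qdiff q f x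
       = q * (\<sigma> x + (1 - 1/q) * x * \<tau> x) / ((1 - q) * x)^2 * (f (q * x) - f x)
         + q^2 * \<sigma> x / ((1 - q) * x)^2 * (f (x / q) - f x)"
proof -
  define E where "E = (1 - q) * x"
  have E: "E \<noteq> 0" using assms by (simp add: E_def)
  have "x / q \<noteq> 0" "q * (x / q) = x" "(1 - q) * (x / q) = E / q" "(1 - 1/q) * x = - (E / q)"
    using assms by (auto simp: E_def field_simps)
  then have qdiffs: "qdiff q f x = (f x - f (q * x)) / E"
      "qdiff (1/q) (qdiff q f) x
         = ((f x - f (q * x)) / E - (f (x / q) - f x) / (E / q)) / (- (E / q))"
    using assms by (simp_all add: qdiff_def E_def[symmetric])
  have \<sigma>_shift: "q * (\<sigma> x + (1 - 1/q) * x * \<tau> x) = q * \<sigma> x - E * \<tau> x"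
    using assms by (simp add: E_def field_simps)
  show ?thesis
    unfolding qdiffs \<sigma>_shift E_def[symmetric] using assms E
    by (simp add: field_simps power2_eq_square)
qed

definition qEHT_nu :: "real \<Rightarrow> real \<Rightarrow> real \<Rightarrow> real \<Rightarrow> nat \<Rightarrow> real" where
  "qEHT_nu q s1 a1 t0 k = qnum q (real k) * (t0 - s1 * a1 / 2 * qnum (1/q) (real k - 1))"

lemma qEHT_op_monomial:
  assumes q: "0 < q" "q \<noteq> 1" and x: "x \<noteq> 0"
  shows "s1/2 * x * (x - a1) * qdiff (1/q) (qdiff q (\<lambda>x. x ^ k)) x
           + (t1 * x + t0) * qdiff q (\<lambda>x. x ^ k) x
         = - qEHT_lambda q s1 t1 k * x ^ k + qEHT_nu q s1 a1 t0 k * x ^ (k - 1)"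
proof -
  have "q \<noteq> 0" using q by simp
  note diff_form = qEHT_difference_form[where \<sigma> = "\<lambda>x. s1/2 * x * (x - a1)"
      and \<tau> = "\<lambda>x. t1 * x + t0" and f = "\<lambda>x. x ^ k", OF this q(2) x]
  show ?thesis
  proof (cases k)
    case 0
    then show ?thesis
      unfolding diff_form using q by (simp add: qEHT_lambda_def qEHT_nu_def qnum_def)
  next
    case (Suc m)
    define u where "u = q ^ m"
    have u: "u \<noteq> 0" using q by (simp add: u_def)
    have pow: "(q * x) ^ k = q * u * x * x ^ m" "(x / q) ^ k = x * x ^ m / (q * u)"
      "x ^ k = x * x ^ m" "x ^ (k - 1) = x ^ m"
      using Suc by (simp_all add: u_def power_mult_distrib power_divide)
    define E where "E = 1 - q"
    have E: "E \<noteq> 0" using q by (simp add: E_def)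
    have qnums: "qnum q (real k) = (1 - q * u) / E" "qnum (1/q) (real k - 1) = q * (1/u - 1) / E"
      using q Suc qnum_of_nat[of q k] qnum_of_nat[of "1/q" m]
      by (simp_all add: u_def power_one_over E_def field_simps)
    show ?thesis
      unfolding diff_form qEHT_lambda_def qEHT_nu_def pow qnums E_def[symmetric]
      using q x u E by (simp add: field_simps power2_eq_square) (simp add: E_def algebra_simps)
  qed
qed

lemma sum_triangular_eigen:
  fixes \<mu> \<nu> c :: "nat \<Rightarrow> 'a::comm_ring_1"
  assumes "\<nu> 0 = 0" and rec: "\<And>k. k < n \<Longrightarrow> (\<mu> k - \<mu> n) * c k + \<nu> (Suc k) * c (Suc k) = 0"
  shows "(\<Sum>k\<le>n. c k * (\<mu> k * x ^ k + \<nu> k * x ^ (k - 1))) = \<mu> n * (\<Sum>k\<le>n. c k * x ^ k)"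
proof -
  have "(\<Sum>k\<le>n. c k * (\<mu> k * x ^ k + \<nu> k * x ^ (k - 1))) - \<mu> n * (\<Sum>k\<le>n. c k * x ^ k)
      = (\<Sum>k\<le>n. (\<mu> k - \<mu> n) * c k * x ^ k) + (\<Sum>k\<le>n. \<nu> k * c k * x ^ (k - 1))"
    by (simp add: sum_distrib_left sum.distrib[symmetric] sum_subtractf[symmetric] algebra_simps)
  also have "(\<Sum>k\<le>n. (\<mu> k - \<mu> n) * c k * x ^ k) = (\<Sum>k<n. (\<mu> k - \<mu> n) * c k * x ^ k)"
    by (simp add: lessThan_Suc_atMost[symmetric])
  also have "(\<Sum>k\<le>n. \<nu> k * c k * x ^ (k - 1)) = (\<Sum>k<n. \<nu> (Suc k) * c (Suc k) * x ^ k)"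
    using assms(1) by (simp add: sum.atMost_shift)
  also have "(\<Sum>k<n. (\<mu> k - \<mu> n) * c k * x ^ k) + (\<Sum>k<n. \<nu> (Suc k) * c (Suc k) * x ^ k)
      = (\<Sum>k<n. ((\<mu> k - \<mu> n) * c k + \<nu> (Suc k) * c (Suc k)) * x ^ k)"
    by (simp add: sum.distrib[symmetric] algebra_simps)
  also have "\<dots> = 0" using rec by simp
  finally show ?thesis by simp
qed

lemma qEHT_op_poly_sum:
  assumes q: "0 < q" "q \<noteq> 1" and x: "x \<noteq> 0"
  shows "s1/2 * x * (x - a1) * qdiff (1/q) (qdiff q (\<lambda>x. \<Sum>k\<le>n. c k * x ^ k)) x
           + (t1 * x + t0) * qdiff q (\<lambda>x. \<Sum>k\<le>n. c k * x ^ k) x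
         = (\<Sum>k\<le>n. c k * (- qEHT_lambda q s1 t1 k * x ^ k + qEHT_nu q s1 a1 t0 k * x ^ (k - 1)))"
proof -
  have "q \<noteq> 0" using q by simp
  obtain A B where op: "\<And>f. s1/2 * x * (x - a1) * qdiff (1/q) (qdiff q f) x
      + (t1 * x + t0) * qdiff q f x = A * (f (q * x) - f x) + B * (f (x / q) - f x)"
    using qEHT_difference_form[where \<sigma> = "\<lambda>x. s1/2 * x * (x - a1)"
      and \<tau> = "\<lambda>x. t1 * x + t0", OF \<open>q \<noteq> 0\<close> q(2) x] by blast
  have "A * ((\<Sum>k\<le>n. c k * (q * x) ^ k) - (\<Sum>k\<le>n. c k * x ^ k))
        + B * ((\<Sum>k\<le>n. c k * (x / q) ^ k) - (\<Sum>k\<le>n. c k * x ^ k))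
      = (\<Sum>k\<le>n. c k * (A * ((q * x) ^ k - x ^ k) + B * ((x / q) ^ k - x ^ k)))"
    by (simp add: sum_distrib_left sum_subtractf[symmetric] sum.distrib[symmetric] algebra_simps)
  then show ?thesis
    unfolding op qEHT_op_monomial[OF q x, symmetric] .
qed

text \<open>Coefficients of the monic solution, obtained by solving \<open>qEHT_coeff_recurrence\<close> downwards.\<close>

definition qEHT_coeff :: "real \<Rightarrow> real \<Rightarrow> real \<Rightarrow> real \<Rightarrow> real \<Rightarrow> nat \<Rightarrow> nat \<Rightarrow> real" where
  "qEHT_coeff q s1 a1 t1 t0 n k =
     (if k \<le> n
      then \<Prod>i\<in>{k..<n}. qEHT_nu q s1 a1 t0 (Suc i) / (qEHT_lambda q s1 t1 i - qEHT_lambda q s1 t1 n)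
      else 0)"

definition qEHT_poly :: "real \<Rightarrow> real \<Rightarrow> real \<Rightarrow> real \<Rightarrow> real \<Rightarrow> nat \<Rightarrow> real poly" where
  "qEHT_poly q s1 a1 t1 t0 n = (\<Sum>k\<le>n. monom (qEHT_coeff q s1 a1 t1 t0 n k) k)"

lemma coeff_qEHT_poly: "coeff (qEHT_poly q s1 a1 t1 t0 n) k = qEHT_coeff q s1 a1 t1 t0 n k"
  unfolding qEHT_poly_def coeff_sum coeff_monom by (simp add: qEHT_coeff_def)

lemma poly_qEHT_poly:
  "poly (qEHT_poly q s1 a1 t1 t0 n) x = (\<Sum>k\<le>n. qEHT_coeff q s1 a1 t1 t0 n k * x ^ k)"
  unfolding qEHT_poly_def by (simp add: poly_sum poly_monom)

lemma degree_qEHT_poly: "degree (qEHT_poly q s1 a1 t1 t0 n) = n"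
proof (rule antisym)
  show "degree (qEHT_poly q s1 a1 t1 t0 n) \<le> n"
    by (rule degree_le) (simp add: coeff_qEHT_poly qEHT_coeff_def)
  show "n \<le> degree (qEHT_poly q s1 a1 t1 t0 n)"
    by (rule le_degree) (simp add: coeff_qEHT_poly qEHT_coeff_def)
qed

lemma lead_coeff_qEHT_poly: "lead_coeff (qEHT_poly q s1 a1 t1 t0 n) = 1"
  by (simp add: degree_qEHT_poly coeff_qEHT_poly qEHT_coeff_def)

lemma qEHT_coeff_recurrence:
  assumes "k < n" "qEHT_lambda q s1 t1 k \<noteq> qEHT_lambda q s1 t1 n"
  shows "(qEHT_lambda q s1 t1 n - qEHT_lambda q s1 t1 k) * qEHT_coeff q s1 a1 t1 t0 n k
           + qEHT_nu q s1 a1 t0 (Suc k) * qEHT_coeff q s1 a1 t1 t0 n (Suc k) = 0"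
proof -
  have "qEHT_coeff q s1 a1 t1 t0 n k = qEHT_nu q s1 a1 t0 (Suc k)
      / (qEHT_lambda q s1 t1 k - qEHT_lambda q s1 t1 n) * qEHT_coeff q s1 a1 t1 t0 n (Suc k)"
    using assms(1) by (simp add: qEHT_coeff_def prod.atLeast_Suc_lessThan)
  then show ?thesis using assms(2) by (simp add: field_simps)
qed

lemma solves_qEHT_qEHT_poly:
  assumes q: "0 < q" "q \<noteq> 1"
    and distinct: "\<And>k. k < n \<Longrightarrow> qEHT_lambda q s1 t1 k \<noteq> qEHT_lambda q s1 t1 n"
  shows "solves_qEHT q (\<lambda>x. s1/2 * x * (x - a1)) (\<lambda>x. t1 * x + t0) (qEHT_lambda q s1 t1 n)
           (poly (qEHT_poly q s1 a1 t1 t0 n))"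
  unfolding solves_qEHT_def
proof
  fix x :: real
  define c where "c = qEHT_coeff q s1 a1 t1 t0 n"
  have rec: "(qEHT_lambda q s1 t1 n - qEHT_lambda q s1 t1 k) * c k
      + qEHT_nu q s1 a1 t0 (Suc k) * c (Suc k) = 0" if "k < n" for k
    unfolding c_def by (rule qEHT_coeff_recurrence[OF that distinct[OF that]])
  have lambda_0: "qEHT_lambda q s1 t1 0 = 0" and nu_0: "qEHT_nu q s1 a1 t0 0 = 0"
    using q by (simp_all add: qEHT_lambda_def qEHT_nu_def qnum_def)
  have P: "poly (qEHT_poly q s1 a1 t1 t0 n) = (\<lambda>x. \<Sum>k\<le>n. c k * x ^ k)"
    by (simp add: fun_eq_iff poly_qEHT_poly c_def)
  show "s1/2 * x * (x - a1) * qdiff (1/q) (qdiff q (poly (qEHT_poly q s1 a1 t1 t0 n))) x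
      + (t1 * x + t0) * qdiff q (poly (qEHT_poly q s1 a1 t1 t0 n)) x
      + qEHT_lambda q s1 t1 n * poly (qEHT_poly q s1 a1 t1 t0 n) x = 0"
  proof (cases "x = 0")
    case True
    have "qdiff q (poly (qEHT_poly q s1 a1 t1 t0 n)) 0 = c 1"
      unfolding qdiff_def using DERIV_imp_deriv[OF poly_DERIV[of "qEHT_poly q s1 a1 t1 t0 n" 0]]
      by (simp add: poly_0_coeff_0 coeff_pderiv coeff_qEHT_poly c_def)
    moreover have "poly (qEHT_poly q s1 a1 t1 t0 n) 0 = c 0"
      by (simp add: poly_0_coeff_0 coeff_qEHT_poly c_def)
    moreover have "t0 * c 1 + qEHT_lambda q s1 t1 n * c 0 = 0"
    proof (cases n)
      case 0
      then show ?thesis by (simp add: c_def qEHT_coeff_def lambda_0)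
    next
      case (Suc m)
      have "qEHT_nu q s1 a1 t0 1 = t0" using q by (simp add: qEHT_nu_def qnum_def)
      then show ?thesis using rec[of 0] Suc lambda_0 by (simp add: algebra_simps)
    qed
    ultimately show ?thesis using True by simp
  next
    case False
    have "(\<Sum>k\<le>n. c k * (- qEHT_lambda q s1 t1 k * x ^ k + qEHT_nu q s1 a1 t0 k * x ^ (k - 1)))
        = - qEHT_lambda q s1 t1 n * (\<Sum>k\<le>n. c k * x ^ k)"
      by (rule sum_triangular_eigen) (use nu_0 rec in \<open>simp_all add: algebra_simps\<close>)
    then show ?thesis unfolding P qEHT_op_poly_sum[OF q False] by simp
  qed
qed

text \<open>
  By the Pearson relation the B-part of (lm - la) w_j Y_j Z_j at j + 1 cancels its A-part at j,
  so the partial sums telescope. At j = 0 the truncated j - 1 makes the B-term vanish.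
\<close>

lemma discrete_sturm_liouville_orthogonal:
  fixes A B w Y Z :: "nat \<Rightarrow> real"
  assumes eqY: "\<And>j. A j * (Y (Suc j) - Y j) + B j * (Y (j - 1) - Y j) + la * Y j = 0"
    and eqZ: "\<And>j. A j * (Z (Suc j) - Z j) + B j * (Z (j - 1) - Z j) + lm * Z j = 0"
    and pearson: "\<And>j. w (Suc j) * B (Suc j) = w j * A j"
    and summable: "summable (\<lambda>j. w j * Y j * Z j)"
    and boundary: "(\<lambda>j. w j * A j * (Z j * Y (Suc j) - Y j * Z (Suc j))) \<longlonglongrightarrow> 0"
    and "la \<noteq> lm"
  shows "(\<Sum>j. w j * Y j * Z j) = 0"
proof -
  define H where "H j = w j * A j * (Z j * Y (Suc j) - Y j * Z (Suc j))" for j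
  define K where "K j = w j * B j * (Z j * Y (j - 1) - Y j * Z (j - 1))" for j
  have step: "(lm - la) * (w j * Y j * Z j) = H j + K j" for j
    using eqY[of j] eqZ[of j] unfolding H_def K_def by algebra
  have K_Suc: "K (Suc j) = - H j" for j
    unfolding K_def H_def using pearson[of j] by (simp add: algebra_simps)
  have partial: "(lm - la) * (\<Sum>j<Suc N. w j * Y j * Z j) = H N" for N
  proof (induction N)
    case 0
    then show ?case using step[of 0] by (simp add: K_def)
  next
    case (Suc N)
    then show ?case using step[of "Suc N"] by (simp add: distrib_left K_Suc)
  qed
  have "(\<lambda>N. (lm - la) * (\<Sum>j<Suc N. w j * Y j * Z j)) \<longlonglongrightarrow> (lm - la) * (\<Sum>j. w j * Y j * Z j)"
    by (intro tendsto_mult_left LIMSEQ_Suc summable_LIMSEQ summable)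
  moreover have "(\<lambda>N. (lm - la) * (\<Sum>j<Suc N. w j * Y j * Z j)) \<longlonglongrightarrow> 0"
    unfolding partial H_def by (rule boundary)
  ultimately have "(lm - la) * (\<Sum>j. w j * Y j * Z j) = 0" by (rule LIMSEQ_unique)
  then show ?thesis using \<open>la \<noteq> lm\<close> by simp
qed

definition qpoch_weight :: "real \<Rightarrow> real \<Rightarrow> nat \<Rightarrow> real" where
  "qpoch_weight \<beta> q j = qpoch_inf (q ^ Suc j) q / qpoch_inf (\<beta> * q ^ j) q"

lemma qpoch_weight_pos:
  assumes "0 < q" "q < 1" "\<beta> < 1"
  shows "qpoch_weight \<beta> q j > 0"
proof -
  have "q ^ Suc j < 1" "\<beta> * q ^ j < 1"
    using assms by (simp_all add: power_Suc_less_one mult_power_less_one del: power_Suc)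
  then show ?thesis
    unfolding qpoch_weight_def using assms by (simp add: qpoch_inf_pos)
qed

lemma qpoch_weight_Suc:
  assumes "0 < q" "q < 1" "\<beta> < 1"
  shows "qpoch_weight \<beta> q (Suc j) * (1 - q ^ Suc j) = qpoch_weight \<beta> q j * (1 - \<beta> * q ^ j)"
proof -
  have lt: "q ^ Suc j < 1" "\<beta> * q ^ j < 1"
    using assms by (simp_all add: power_Suc_less_one mult_power_less_one del: power_Suc)
  have "qpoch_inf (q ^ Suc j) q = (1 - q ^ Suc j) * qpoch_inf (q ^ Suc (Suc j)) q"
    using qpoch_inf_shift[OF assms(1,2), of "q ^ Suc j"] lt by (simp add: mult.commute)
  moreover have "qpoch_inf (\<beta> * q ^ j) q = (1 - \<beta> * q ^ j) * qpoch_inf (\<beta> * q ^ Suc j) q"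
    using qpoch_inf_shift[OF assms(1,2), of "\<beta> * q ^ j"] lt by (simp add: mult_ac)
  ultimately show ?thesis
    unfolding qpoch_weight_def using lt(2) by simp
qed

lemma summable_qpoch_weight:
  assumes q: "0 < q" "q < 1" and \<beta>: "\<beta> < 1" and r: "0 \<le> r" "r < 1"
  shows "summable (\<lambda>j. r ^ j * qpoch_weight \<beta> q j)"
proof -
  define R where "R j = (1 - \<beta> * q ^ j) / (1 - q ^ Suc j)" for j
  have "(\<lambda>j. r * R j) \<longlonglongrightarrow> r * ((1 - \<beta> * 0) / (1 - q * 0))"
    unfolding R_def power_Suc using q by (intro tendsto_intros) auto
  then have "eventually (\<lambda>j. r * R j < (1 + r) / 2) sequentially"
    using r by (intro order_tendstoD(2)) auto
  then obtain N where N: "\<And>j. j \<ge> N \<Longrightarrow> r * R j < (1 + r) / 2"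
    by (auto simp: eventually_sequentially)
  show ?thesis
  proof (rule summable_ratio_test)
    show "(1 + r) / 2 < 1" using r by simp
    fix j assume "j \<ge> N"
    have "0 < 1 - q ^ Suc j" "0 < 1 - \<beta> * q ^ j"
      using power_Suc_less_one[OF q, of j] mult_power_less_one[of q \<beta> j] q \<beta>
      by (simp_all del: power_Suc)
    then have "qpoch_weight \<beta> q (Suc j) = R j * qpoch_weight \<beta> q j" "0 < R j"
      using qpoch_weight_Suc[OF q \<beta>, of j] by (simp_all add: R_def field_simps)
    then have "norm (r ^ Suc j * qpoch_weight \<beta> q (Suc j))
        = r * R j * norm (r ^ j * qpoch_weight \<beta> q j)"
      using qpoch_weight_pos[OF q \<beta>, of j] r by (simp add: abs_mult)
    also have "\<dots> \<le> (1 + r) / 2 * norm (r ^ j * qpoch_weight \<beta> q j)"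
      using N[OF \<open>j \<ge> N\<close>] by (intro mult_right_mono) auto
    finally show "norm (r ^ Suc j * qpoch_weight \<beta> q (Suc j))
        \<le> (1 + r) / 2 * norm (r ^ j * qpoch_weight \<beta> q j)" .
  qed
qed

lemma summable_mult_convergent:
  fixes w g :: "nat \<Rightarrow> real"
  assumes "summable w" "\<And>j. 0 \<le> w j" "convergent g"
  shows "summable (\<lambda>j. w j * g j)"
proof -
  obtain K where K: "\<And>j. norm (g j) \<le> K"
    using convergent_imp_Bseq[OF assms(3)] by (auto simp: Bseq_def)
  show ?thesis
  proof (rule summable_comparison_test')
    show "summable (\<lambda>j. w j * K)" by (rule summable_mult2[OF assms(1)])
    show "norm (w j * g j) \<le> w j * K" for j
      using K[of j] assms(2)[of j] by (simp add: abs_mult mult_left_mono)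
  qed
qed

lemma poly_casoratian_factor:
  fixes y z :: "'a::comm_ring_1 poly"
  obtains S where "\<And>x. poly z x * poly y (q * x) - poly y x * poly z (q * x) = x * poly S x"
proof -
  define R where "R = z * pcompose y [:0, q:] - y * pcompose z [:0, q:]"
  have R: "poly R x = poly z x * poly y (q * x) - poly y x * poly z (q * x)" for x
    by (simp add: R_def poly_pcompose algebra_simps)
  then have "poly R 0 = 0" by simp
  then have "[:- 0, 1:] dvd R" by (simp only: poly_eq_0_iff_dvd)
  then obtain S where "R = [:0, 1:] * S" by (auto elim: dvdE)
  then have "poly R x = x * poly S x" for x by simp
  then show ?thesis using that R by metis
qed

lemma summable_weighted_poly_geometric:
  fixes w :: "nat \<Rightarrow> real" and y z :: "real poly"
  assumes "summable w" "\<And>j. 0 \<le> w j" "0 < q" "q < 1"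
  shows "summable (\<lambda>j. w j * poly y (q ^ j * b) * poly z (q ^ j * b))"
proof -
  have "(\<lambda>j. q ^ j * b) \<longlonglongrightarrow> 0"
    using assms by (intro tendsto_mult_left_zero LIMSEQ_power_zero) auto
  then have "convergent (\<lambda>j. poly (y * z) (q ^ j * b))"
    unfolding convergent_def using isCont_tendsto_compose[OF poly_isCont[where p = "y * z"]]
    by blast
  then show ?thesis
    using summable_mult_convergent[OF assms(1,2)] by (simp add: mult.assoc)
qed

lemma qEHT_orthogonal_geometric:
  fixes \<sigma> \<tau> :: "real \<Rightarrow> real" and y z :: "real poly" and w :: "nat \<Rightarrow> real" and q b :: real
  defines "\<sigma>\<^sub>2 \<equiv> \<lambda>x. q * (\<sigma> x + (1 - 1/q) * x * \<tau> x)"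
  assumes q: "0 < q" "q < 1" and b: "b \<noteq> 0" "\<sigma> b = 0"
    and y: "solves_qEHT q \<sigma> \<tau> la (poly y)" and z: "solves_qEHT q \<sigma> \<tau> lm (poly z)" and "la \<noteq> lm"
    and pearson: "\<And>j. w (Suc j) * \<sigma> (q ^ Suc j * b) = w j * \<sigma>\<^sub>2 (q ^ j * b)"
    and w: "summable w" "\<And>j. 0 \<le> w j"
    and boundary: "(\<lambda>j. w j * \<sigma>\<^sub>2 (q ^ j * b) / (q ^ j * b)) \<longlonglongrightarrow> 0"
  shows "(\<Sum>j. w j * poly y (q ^ j * b) * poly z (q ^ j * b)) = 0"
proof -
  define x where "x j = q ^ j * b" for j
  define A where "A j = \<sigma>\<^sub>2 (x j) / ((1 - q) * x j)^2" for j
  define B where "B j = q^2 * \<sigma> (x j) / ((1 - q) * x j)^2" for j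
  have x: "x j \<noteq> 0" "x (Suc j) = q * x j" "x (Suc j) / q = x j" for j
    using q b by (simp_all add: x_def)
  have x_lim: "x \<longlonglongrightarrow> 0"
    unfolding x_def using q by (intro tendsto_mult_left_zero LIMSEQ_power_zero) auto
  have eq: "A j * (f (x (Suc j)) - f (x j)) + B j * (f (x (j - 1)) - f (x j)) + l * f (x j) = 0"
    if "solves_qEHT q \<sigma> \<tau> l f" for f l j
  proof -
    have "\<sigma> (x j) * qdiff (1/q) (qdiff q f) (x j) + \<tau> (x j) * qdiff q f (x j)
        = A j * (f (x (Suc j)) - f (x j)) + B j * (f (x j / q) - f (x j))"
      using qEHT_difference_form[of q "x j" \<sigma> f \<tau>] q x by (simp add: A_def B_def \<sigma>\<^sub>2_def)
    also have "B j * (f (x j / q) - f (x j)) = B j * (f (x (j - 1)) - f (x j))"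
      using b by (cases j) (simp_all add: B_def x_def x(3))
    finally show ?thesis
      using that[unfolded solves_qEHT_def, rule_format, of "x j"] by linarith
  qed
  have AB: "w (Suc j) * B (Suc j) = w j * A j" for j
  proof -
    have "B (Suc j) = \<sigma> (x (Suc j)) / ((1 - q) * x j)^2"
      unfolding B_def x(2) using q by (simp add: power_mult_distrib)
    then show ?thesis
      using pearson[of j, folded x_def] by (simp add: A_def)
  qed
  have summable: "summable (\<lambda>j. w j * poly y (x j) * poly z (x j))"
    unfolding x_def using summable_weighted_poly_geometric[OF w q] .
  obtain S where S: "\<And>x. poly z x * poly y (q * x) - poly y x * poly z (q * x) = x * poly S x"
    using poly_casoratian_factor[where y = y and z = z and q = q] by blast
  have "(\<lambda>j. w j * \<sigma>\<^sub>2 (x j) / x j * (poly S (x j) / (1 - q)^2)) \<longlonglongrightarrow> 0 * (poly S 0 / (1 - q)^2)"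
    using boundary unfolding x_def[symmetric]
    by (intro tendsto_mult tendsto_divide tendsto_const isCont_tendsto_compose[OF poly_isCont x_lim])
      (use q in auto)
  moreover have "w j * A j * (poly z (x j) * poly y (x (Suc j)) - poly y (x j) * poly z (x (Suc j)))
      = w j * \<sigma>\<^sub>2 (x j) / x j * (poly S (x j) / (1 - q)^2)" for j
    unfolding x(2) S A_def using x(1)[of j]
    by (simp add: power_mult_distrib power2_eq_square mult_ac)
  ultimately have
    "(\<lambda>j. w j * A j * (poly z (x j) * poly y (x (Suc j)) - poly y (x j) * poly z (x (Suc j))))
      \<longlonglongrightarrow> 0"
    by simp
  then show ?thesis
    using discrete_sturm_liouville_orthogonal[OF eq[OF y] eq[OF z] AB summable] \<open>la \<noteq> lm\<close>
    by (simp add: x_def)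
qed

lemma suminf_weighted_poly_square_pos:
  fixes p :: "real poly" and w x :: "nat \<Rightarrow> real"
  assumes w: "\<And>j. 0 < w j" and summable: "summable (\<lambda>j. w j * poly p (x j) * poly p (x j))"
    and "p \<noteq> 0" "inj x"
  shows "0 < (\<Sum>j. w j * poly p (x j) * poly p (x j))"
proof -
  have "\<not> range x \<subseteq> {t. poly p t = 0}"
    using poly_roots_finite[OF \<open>p \<noteq> 0\<close>] range_inj_infinite[OF \<open>inj x\<close>] finite_subset by blast
  then obtain i where i: "poly p (x i) \<noteq> 0" by auto
  show ?thesis
  proof (rule suminf_pos2[OF summable])
    show "0 \<le> w j * poly p (x j) * poly p (x j)" for j
      using w[of j] by (simp add: mult.assoc)
    show "0 < w i * poly p (x i) * poly p (x i)"
      using w[of i] i by (simp add: mult.assoc mult_pos_pos not_square_less_zero less_le)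
  qed
qed

lemma cabs_pow_geometric:
  assumes "0 < q" "0 < b"
  shows "cabs_pow (q ^ j * b) \<alpha> = exp (\<alpha> * of_real (ln q)) ^ j * cabs_pow b \<alpha>"
proof -
  have "ln \<bar>q ^ j * b\<bar> = of_nat j * ln q + ln b" using assms by (simp add: ln_mult ln_realpow)
  then show ?thesis
    unfolding cabs_pow_def using assms
    by (simp add: algebra_simps exp_add exp_of_nat_mult[symmetric])
qed

lemma power_int_minus_two: "(q::real) powi (-2) = 1 / q^2"
  by (simp add: power_int_minus_left power_int_def power_inverse inverse_eq_divide power_one_over)

lemma qEHT_Lambda_neg_imp_pos_ratio:
  fixes q s1 t1 :: real
  assumes "0 < q" "q < 1" and "q^2 * (q powi (-2) * (1 + (1 - 1/q) * t1 / (s1 / 2))) < 0"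
  shows "0 < t1 / s1"
proof -
  have "1 + (1 - 1/q) * t1 / (s1 / 2) < 0"
    using assms by (simp add: power_int_minus_two)
  moreover have "(1 - 1/q) * t1 / (s1 / 2) = - ((1/q - 1) * (2 * (t1 / s1)))"
    by (simp add: algebra_simps diff_divide_distrib)
  moreover have "0 < 1/q - 1" using assms by simp
  ultimately show ?thesis using zero_less_mult_pos[of "1/q - 1" "2 * (t1 / s1)"] by simp
qed

lemma qEHT_q_alpha_eq_y0:
  fixes q s1 a1 t1 t0 s2 a2 :: real
  assumes "q \<noteq> 0" "s1 \<noteq> 0" "a1 \<noteq> 0"
    and \<sigma>2: "\<forall>x. q * (s1/2 * x * (x - a1) + (1 - 1/q) * x * (t1 * x + t0)) = s2/2 * x * (x - a2)"
  shows "q powi (-2) * s2 * a2 / (s1 * a1) = 1/q * (1 - (1 - 1/q) / a1 * (t0 / (s1 / 2)))"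
proof -
  have "q * (s2 * a2) = q * (q * s1 * a1 - 2 * (q - 1) * t0)"
    using \<sigma>2[rule_format, of 1] \<sigma>2[rule_format, of "-1"] assms(1) by (simp add: field_simps)
  then have "s2 * a2 = q * s1 * a1 - 2 * (q - 1) * t0" using assms(1) by simp
  then show ?thesis
    using assms(1-3) by (simp add: power_int_minus_two field_simps power2_eq_square)
qed

lemma qEHT_orthogonal_qpoch_weight:
  fixes y z :: "real poly"
  assumes q: "0 < q" "q < 1" and a: "a2 < 0" "0 < b"
    and \<sigma>2: "\<And>x. q * (s1/2 * x * (x - b) + (1 - 1/q) * x * (t1 * x + t0)) = s2/2 * x * (x - a2)"
    and c: "s2 * a2 = q^2 * c * s1 * b" "0 \<le> q * c" "q * c < 1"
    and y: "solves_qEHT q (\<lambda>x. s1/2 * x * (x - b)) (\<lambda>x. t1 * x + t0) la (poly y)"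
    and z: "solves_qEHT q (\<lambda>x. s1/2 * x * (x - b)) (\<lambda>x. t1 * x + t0) lm (poly z)"
    and "la \<noteq> lm"
  shows "(\<Sum>j. (q * c) ^ j * qpoch_weight (b / a2) q j * poly y (q ^ j * b) * poly z (q ^ j * b))
    = 0"
proof -
  define \<pi> where "\<pi> = qpoch_weight (b / a2) q"
  define w where "w = (\<lambda>j. (q * c) ^ j * \<pi> j)"
  have \<beta>: "b / a2 < 1" using a by (simp add: divide_pos_neg)
  have w: "summable w" "0 \<le> w j" for j
    using summable_qpoch_weight[OF q \<beta> c(2,3)] qpoch_weight_pos[OF q \<beta>] c(2)
    by (simp_all add: w_def \<pi>_def less_imp_le)
  have pearson: "w (Suc j) * (s1/2 * (q ^ Suc j * b) * (q ^ Suc j * b - b))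
      = w j * (s2/2 * (q ^ j * b) * (q ^ j * b - a2))" for j
  proof -
    have "w (Suc j) * (s1/2 * (q ^ Suc j * b) * (q ^ Suc j * b - b))
        = - ((q * c) ^ j * (q^2 * c * s1 * b) * b * q ^ j / 2 * (\<pi> (Suc j) * (1 - q ^ Suc j)))"
      by (simp add: w_def field_simps power2_eq_square)
    also have "\<dots> = - ((q * c) ^ j * (s2 * a2) * b * q ^ j / 2 * (\<pi> j * (1 - b / a2 * q ^ j)))"
      unfolding c(1) \<pi>_def qpoch_weight_Suc[OF q \<beta>] ..
    also have "\<dots> = w j * (s2/2 * (q ^ j * b) * (q ^ j * b - a2))"
      using a by (simp add: w_def field_simps)
    finally show ?thesis .
  qed
  have "(\<lambda>j. w j * (s2/2 * (q ^ j * b - a2))) \<longlonglongrightarrow> 0 * (s2/2 * (0 * b - a2))"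
    using q by (intro tendsto_intros summable_LIMSEQ_zero w) auto
  then have boundary: "(\<lambda>j. w j * (s2/2 * (q ^ j * b) * (q ^ j * b - a2)) / (q ^ j * b)) \<longlonglongrightarrow> 0"
    using q a by simp
  have "(\<Sum>j. w j * poly y (q ^ j * b) * poly z (q ^ j * b)) = 0"
  proof (rule qEHT_orthogonal_geometric[OF q _ _ y z \<open>la \<noteq> lm\<close>])
    show "b \<noteq> 0" "s1/2 * b * (b - b) = 0" using a by simp_all
  qed (use pearson w boundary in \<open>simp_all only: \<sigma>2\<close>)
  then show ?thesis by (simp add: w_def \<pi>_def)
qed

definition qEHT_rho :: "real \<Rightarrow> real \<Rightarrow> real \<Rightarrow> complex \<Rightarrow> real \<Rightarrow> complex" where
  "qEHT_rho q b a2 \<alpha> x = cabs_pow x \<alpha> * of_real (qpoch_inf (q * x / b) q / qpoch_inf (x / a2) q)"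

lemma sums_qEHT_rho_geometric:
  fixes f :: "nat \<Rightarrow> real"
  assumes "0 < q" "0 < b" "exp (\<alpha> * of_real (ln q)) = of_real c"
    and "summable (\<lambda>j. (q * c) ^ j * qpoch_weight (b / a2) q j * f j)"
  shows "(\<lambda>j. of_real ((1 - q) * b * q ^ j * f j) * qEHT_rho q b a2 \<alpha> (q ^ j * b))
         sums (of_real ((1 - q) * b * (\<Sum>j. (q * c) ^ j * qpoch_weight (b / a2) q j * f j))
               * cabs_pow b \<alpha>)"
proof -
  have summand: "of_real ((1 - q) * b * q ^ j * f j) * qEHT_rho q b a2 \<alpha> (q ^ j * b)
        = of_real ((1 - q) * b * ((q * c) ^ j * qpoch_weight (b / a2) q j * f j)) * cabs_pow b \<alpha>" for j
  proof -
    have "q * (q ^ j * b) / b = q ^ Suc j" "q ^ j * b / a2 = b / a2 * q ^ j"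
      using assms(2) by simp_all
    then show ?thesis
      unfolding qEHT_rho_def cabs_pow_geometric[OF assms(1,2)] assms(3) qpoch_weight_def
      by (simp add: power_mult_distrib algebra_simps)
  qed
  show ?thesis
    unfolding summand by (intro sums_mult2 sums_of_real sums_mult summable_sums assms(4))
qed

lemma qEHT_orthogonality_sums:
  fixes P :: "nat \<Rightarrow> real poly" and lam :: "nat \<Rightarrow> real" and \<alpha> :: complex
  assumes q: "0 < q" "q < 1" and a: "a2 < 0" "0 < b"
    and \<sigma>2: "\<And>x. q * (s1/2 * x * (x - b) + (1 - 1/q) * x * (t1 * x + t0)) = s2/2 * x * (x - a2)"
    and c: "s2 * a2 = q^2 * c * s1 * b" "0 < q * c" "q * c < 1"
    and \<alpha>: "exp (\<alpha> * of_real (ln q)) = of_real c"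
    and solves: "\<And>n. solves_qEHT q (\<lambda>x. s1/2 * x * (x - b)) (\<lambda>x. t1 * x + t0) (lam n) (poly (P n))"
    and "inj lam" and P: "\<And>n. P n \<noteq> 0"
  obtains d where "\<And>n. d n \<noteq> 0"
    and "\<And>m n. (\<lambda>j. of_real ((1 - q) * b * q ^ j * poly (P n) (q ^ j * b) * poly (P m) (q ^ j * b))
            * qEHT_rho q b a2 \<alpha> (q ^ j * b))
          sums (if m = n then d n else 0)"
proof -
  define w where "w j = (q * c) ^ j * qpoch_weight (b / a2) q j" for j
  define N where "N n m = (\<Sum>j. w j * poly (P n) (q ^ j * b) * poly (P m) (q ^ j * b))" for n m
  have \<beta>: "b / a2 < 1" using a by (simp add: divide_pos_neg)
  have w_pos: "0 < w j" for j using qpoch_weight_pos[OF q \<beta>] c by (simp add: w_def)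
  have summable: "summable (\<lambda>j. w j * poly (P n) (q ^ j * b) * poly (P m) (q ^ j * b))" for n m
    using summable_weighted_poly_geometric[OF _ _ q] summable_qpoch_weight[OF q \<beta>] w_pos c
    by (simp add: w_def[abs_def] less_imp_le)
  have sums: "(\<lambda>j. of_real ((1 - q) * b * q ^ j * poly (P n) (q ^ j * b) * poly (P m) (q ^ j * b))
        * qEHT_rho q b a2 \<alpha> (q ^ j * b))
      sums (of_real ((1 - q) * b * N n m) * cabs_pow b \<alpha>)" for n m
    using sums_qEHT_rho_geometric[OF q(1) a(2) \<alpha>,
        of a2 "\<lambda>j. poly (P n) (q ^ j * b) * poly (P m) (q ^ j * b)"]
      summable[of n m]
    by (simp add: N_def w_def mult.assoc)
  have orth: "N n m = 0" if "m \<noteq> n" for n m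
    using qEHT_orthogonal_qpoch_weight[OF q a \<sigma>2 c(1) less_imp_le[OF c(2)] c(3) solves solves]
      \<open>inj lam\<close> that
    by (simp add: N_def w_def inj_eq)
  have sums_delta:
    "(\<lambda>j. of_real ((1 - q) * b * q ^ j * poly (P n) (q ^ j * b) * poly (P m) (q ^ j * b))
        * qEHT_rho q b a2 \<alpha> (q ^ j * b))
      sums (if m = n then of_real ((1 - q) * b * N n n) * cabs_pow b \<alpha> else 0)" for n m
    using sums[of n m] orth[of m n] by (cases "m = n") simp_all
  have "inj (\<lambda>j. q ^ j * b)" using q a by (simp add: inj_def power_inject_exp')
  then have "0 < N n n" for n
    unfolding N_def using suminf_weighted_poly_square_pos[OF w_pos summable P] by blast
  then have nonzero: "of_real ((1 - q) * b * N n n) * cabs_pow b \<alpha> \<noteq> 0" for n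
    using q a by (simp add: cabs_pow_def less_imp_neq[symmetric])
  show ?thesis by (rule that[OF nonzero sums_delta])
qed

theorem theorem4p11:
  fixes q s1 a1 t1 t0 s2 a2 b :: real
    and \<sigma>1 \<tau> \<rho> :: "real \<Rightarrow> _"
    and \<alpha> :: complex
  assumes q: "0 < q" "q < 1"
    and \<sigma>1_def: "\<sigma>1 = (\<lambda>x. s1 / 2 * x * (x - a1))"
    and \<tau>_def: "\<tau> = (\<lambda>x. t1 * x + t0)"
    and t1: "t1 \<noteq> 0"
    and s1: "s1 \<noteq> 0" and s2: "s2 \<noteq> 0"
    and \<sigma>2: "\<forall>x. q * (\<sigma>1 x + (1 - 1/q) * x * \<tau> x) = s2 / 2 * x * (x - a2)"
    and a: "a2 < 0" "0 < a1"
    and y0: "0 < q * (1/q * (1 - (1 - 1/q) / a1 * (t0 / (s1 / 2))))"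
            "q * (1/q * (1 - (1 - 1/q) / a1 * (t0 / (s1 / 2)))) < 1"
    and Lam: "q^2 * (q powi (-2) * (1 + (1 - 1/q) * t1 / (s1 / 2))) < 0"
    and b_def: "b = a1"
    and \<alpha>: "exp (\<alpha> * of_real (ln q)) = of_real (q powi (-2) * s2 * a2 / (s1 * b))"
    and \<rho>_def: "\<rho> = (\<lambda>x. cabs_pow x \<alpha> *
                     of_real (qpoch_inf (q * x / b) q / qpoch_inf (x / a2) q))"
  shows "\<exists>(P :: nat \<Rightarrow> real poly) (d :: nat \<Rightarrow> complex).
           (\<forall>n. degree (P n) = n \<and>
                solves_qEHT q \<sigma>1 \<tau> (qEHT_lambda q s1 t1 n) (poly (P n)) \<and>
                d n \<noteq> 0) \<and>
           (\<forall>m n. (\<lambda>j. of_real ((1 - q) * b * q ^ j *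
                        poly (P n) (q ^ j * b) * poly (P m) (q ^ j * b)) * \<rho> (q ^ j * b))
                   sums (if m = n then d n else 0))"
proof -
  have b: "0 < b" "a1 = b" using a b_def by simp_all
  define c where "c = q powi (-2) * s2 * a2 / (s1 * b)"
  have c: "s2 * a2 = q^2 * c * s1 * b" using q s1 b by (simp add: c_def power_int_minus_two)
  have "c = 1/q * (1 - (1 - 1/q) / a1 * (t0 / (s1 / 2)))"
    unfolding c_def b(2)[symmetric] using qEHT_q_alpha_eq_y0[of q s1 a1 t1 t0 s2 a2] \<sigma>2 q s1 a
    by (simp add: \<sigma>1_def \<tau>_def)
  then have qc: "0 < q * c" "q * c < 1" using y0 by simp_all
  have lambda_inj: "inj (qEHT_lambda q s1 t1)"
    using qEHT_lambda_inj qEHT_Lambda_neg_imp_pos_ratio[OF q Lam] q by simp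
  define P where "P = qEHT_poly q s1 b t1 t0"
  have solves: "solves_qEHT q \<sigma>1 \<tau> (qEHT_lambda q s1 t1 n) (poly (P n))" for n
    unfolding P_def \<sigma>1_def \<tau>_def b(2)
    by (rule solves_qEHT_qEHT_poly) (use q lambda_inj in \<open>auto simp: inj_eq\<close>)
  have "P n \<noteq> 0" for n using lead_coeff_qEHT_poly[of q s1 b t1 t0 n] by (auto simp: P_def)
  moreover have "\<And>x. q * (s1/2 * x * (x - b) + (1 - 1/q) * x * (t1 * x + t0)) = s2/2 * x * (x - a2)"
    using \<sigma>2 b by (simp add: \<sigma>1_def \<tau>_def)
  ultimately obtain d where d: "\<And>n. d n \<noteq> 0"
    "\<And>m n. (\<lambda>j. of_real ((1 - q) * b * q ^ j * poly (P n) (q ^ j * b) * poly (P m) (q ^ j * b))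
        * \<rho> (q ^ j * b)) sums (if m = n then d n else 0)"
    using qEHT_orthogonality_sums[OF q a(1) b(1) _ c qc \<alpha>[folded c_def],
        of t1 t0 "qEHT_lambda q s1 t1" P]
      solves lambda_inj unfolding \<sigma>1_def \<tau>_def b(2) \<rho>_def qEHT_rho_def[symmetric] by blast
  show ?thesis
    by (intro exI[of _ P] exI[of _ d] conjI allI solves d) (simp add: P_def degree_qEHT_poly)
qed

end
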